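(* Let $\varphi:\Lambda\to\Gamma$ be a regular covering map of finite simplicial graphs with $\Gamma$ and $\Lambda$ connected. Let $v$ be a vertex of $\Gamma$, $B$ a connected component of $\Gamma\setminus\mathrm{st}(v)$, $\tilde B$ a connected component of $\varphi^{-1}(B)$, and $D=\bigcap_{u\in\varphi^{-1}(v)}C(u,\tilde B)$. Then either $\varphi^{-1}(B)\subseteq D$, or $C(u,\tilde B)=D$ for a vertex $u\in\varphi^{-1}(v)$ whose star is adjacent to $\tilde B$.
   Context: Graphs are finite simplicial graphs; subgraphs are induced. $\mathrm{st}(u)$ is the subgraph induced by $u$ and its neighbours. A covering map $\varphi:\Lambda\to\Gamma$ is a surjective simplicial map mapping the neighbours of each vertex $u$ bijectively onto the neighbours of $\varphi(u)$; regular means the group of graph automorphisms $\mu$ of $\Lambda$ with $\varphi\mu=\varphi$ acts transitively on each fiber. For a vertex $u$ of $\Lambda$ and a connected subgraph $A$ of $\Lambda$ disjoint from $\mathrm{st}(u)$, $C(u,A)$ denotes the component of $\Lambda\setminus\mathrm{st}(u)$ containing $A$. Two disjoint subgraphs are adjacent if some edge has one endpoint in each. *)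

theory Defs
  imports Main
begin

definition sgraph :: "'a set \<Rightarrow> ('a \<Rightarrow> 'a \<Rightarrow> bool) \<Rightarrow> bool" where
  "sgraph V E \<longleftrightarrow> finite V \<and> (\<forall>x y. E x y \<longrightarrow> x \<in> V \<and> y \<in> V)
     \<and> (\<forall>x y. E x y \<longrightarrow> E y x) \<and> (\<forall>x. \<not> E x x)"

definition nbrs :: "'a set \<Rightarrow> ('a \<Rightarrow> 'a \<Rightarrow> bool) \<Rightarrow> 'a \<Rightarrow> 'a set" where
  "nbrs V E u = {w \<in> V. E u w}"

text \<open>Vertex set of st(u): u together with its neighbours (the subgraph is induced).\<close>
definition star :: "'a set \<Rightarrow> ('a \<Rightarrow> 'a \<Rightarrow> bool) \<Rightarrow> 'a \<Rightarrow> 'a set" where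
  "star V E u = insert u (nbrs V E u)"

definition connected_in :: "('a \<Rightarrow> 'a \<Rightarrow> bool) \<Rightarrow> 'a set \<Rightarrow> bool" where
  "connected_in E S \<longleftrightarrow> S \<noteq> {} \<and>
     (\<forall>x\<in>S. \<forall>y\<in>S. (x, y) \<in> {(a, b). a \<in> S \<and> b \<in> S \<and> E a b}\<^sup>*)"

definition component_of :: "('a \<Rightarrow> 'a \<Rightarrow> bool) \<Rightarrow> 'a set \<Rightarrow> 'a set \<Rightarrow> bool" where
  "component_of E S C \<longleftrightarrow> C \<subseteq> S \<and> connected_in E C \<and>
     (\<forall>C'. C \<subseteq> C' \<and> C' \<subseteq> S \<and> connected_in E C' \<longrightarrow> C' = C)"

definition Ccomp :: "'a set \<Rightarrow> ('a \<Rightarrow> 'a \<Rightarrow> bool) \<Rightarrow> 'a \<Rightarrow> 'a set \<Rightarrow> 'a set" where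
  "Ccomp V E u A = (THE C. component_of E (V - star V E u) C \<and> A \<subseteq> C)"

definition adjacent_sets :: "('a \<Rightarrow> 'a \<Rightarrow> bool) \<Rightarrow> 'a set \<Rightarrow> 'a set \<Rightarrow> bool" where
  "adjacent_sets E X Y \<longleftrightarrow> X \<inter> Y = {} \<and> (\<exists>x\<in>X. \<exists>y\<in>Y. E x y)"

definition covering_map ::
  "'a set \<Rightarrow> ('a \<Rightarrow> 'a \<Rightarrow> bool) \<Rightarrow> 'b set \<Rightarrow> ('b \<Rightarrow> 'b \<Rightarrow> bool) \<Rightarrow> ('a \<Rightarrow> 'b) \<Rightarrow> bool" where
  "covering_map VL EL VG EG \<phi> \<longleftrightarrow>
     \<phi> ` VL = VG \<and> (\<forall>x y. EL x y \<longrightarrow> EG (\<phi> x) (\<phi> y)) \<and>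
     (\<forall>u\<in>VL. bij_betw \<phi> (nbrs VL EL u) (nbrs VG EG (\<phi> u)))"

definition deck_transformation ::
  "'a set \<Rightarrow> ('a \<Rightarrow> 'a \<Rightarrow> bool) \<Rightarrow> ('a \<Rightarrow> 'b) \<Rightarrow> ('a \<Rightarrow> 'a) \<Rightarrow> bool" where
  "deck_transformation VL EL \<phi> \<mu> \<longleftrightarrow>
     bij_betw \<mu> VL VL \<and> (\<forall>x\<in>VL. \<forall>y\<in>VL. EL x y \<longleftrightarrow> EL (\<mu> x) (\<mu> y)) \<and>
     (\<forall>x\<in>VL. \<phi> (\<mu> x) = \<phi> x)"

definition regular_covering ::
  "'a set \<Rightarrow> ('a \<Rightarrow> 'a \<Rightarrow> bool) \<Rightarrow> 'b set \<Rightarrow> ('b \<Rightarrow> 'b \<Rightarrow> bool) \<Rightarrow> ('a \<Rightarrow> 'b) \<Rightarrow> bool" where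
  "regular_covering VL EL VG EG \<phi> \<longleftrightarrow> covering_map VL EL VG EG \<phi> \<and>
     (\<forall>x\<in>VL. \<forall>y\<in>VL. \<phi> x = \<phi> y \<longrightarrow>
        (\<exists>\<mu>. deck_transformation VL EL \<phi> \<mu> \<and> \<mu> x = y))"

end

theory Submission
  imports Defs
begin

text \<open>
  Call a vertex \<open>u\<close> over \<open>v\<close> adjacent if \<open>st(u)\<close> is adjacent to \<open>Bt\<close>. Every edge leaving
  \<open>Bt\<close> ends in the star of an adjacent vertex, and there is at least one such edge since
  \<open>\<Lambda>\<close> is connected.

  If \<open>u\<^sub>0\<close> is the only adjacent vertex, no edge leaves \<open>Bt\<close> inside \<open>\<Lambda> - st(u\<^sub>0)\<close>, so
  \<open>C(u\<^sub>0, Bt) = Bt\<close>, which is contained in every \<open>C(u, Bt)\<close>; hence \<open>C(u\<^sub>0, Bt) = D\<close>.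

  Otherwise fix \<open>u\<close> over \<open>v\<close>. Each vertex \<open>a\<close> over \<open>B\<close> lies in a deck translate of \<open>Bt\<close>,
  which is adjacent to the stars of two distinct vertices over \<open>v\<close>; so the component \<open>K\<close> of
  \<open>a\<close> in \<open>\<Lambda> - st(u)\<close> contains \<open>st(w)\<close> for some \<open>w \<noteq> u\<close> over \<open>v\<close>. A deck transformation
  \<open>\<mu>\<close> with \<open>\<mu> u = w\<close> maps the components of \<open>\<Lambda> - st(u)\<close> bijectively and
  size-preservingly onto those of \<open>\<Lambda> - st(w)\<close>, and all of the latter except the one
  containing \<open>st(u)\<close> lie in \<open>K - st(w)\<close>. Hence \<open>K\<close> is strictly the largest component of
  \<open>\<Lambda> - st(u)\<close>. As this holds for every \<open>a\<close> over \<open>B\<close>, they all lie in one component,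
  namely \<open>C(u, Bt)\<close>, so the preimage of \<open>B\<close> is contained in \<open>D\<close>.
\<close>

section \<open>Components of induced subgraphs\<close>

definition edges_within :: "('a \<Rightarrow> 'a \<Rightarrow> bool) \<Rightarrow> 'a set \<Rightarrow> ('a \<times> 'a) set" where
  "edges_within E S = {(a, b). a \<in> S \<and> b \<in> S \<and> E a b}"

text \<open>For \<open>x \<notin> S\<close> this is the junk value \<open>{x}\<close>; all lemmas assume \<open>x \<in> S\<close> where it matters.\<close>
definition component_at :: "('a \<Rightarrow> 'a \<Rightarrow> bool) \<Rightarrow> 'a set \<Rightarrow> 'a \<Rightarrow> 'a set" where
  "component_at E S x = {y. (x, y) \<in> (edges_within E S)\<^sup>*}"

lemma sgraph_symp: "sgraph V E \<Longrightarrow> symp E"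
  unfolding sgraph_def by (blast intro: sympI)

lemma connected_in_iff:
  "connected_in E S \<longleftrightarrow> S \<noteq> {} \<and> (\<forall>x\<in>S. \<forall>y\<in>S. (x, y) \<in> (edges_within E S)\<^sup>*)"
  unfolding connected_in_def edges_within_def by simp

lemma edges_within_rtrancl_mono:
  "(x, y) \<in> (edges_within E A)\<^sup>* \<Longrightarrow> A \<subseteq> B \<Longrightarrow> (x, y) \<in> (edges_within E B)\<^sup>*"
  using rtrancl_mono[of "edges_within E A" "edges_within E B"]
  unfolding edges_within_def by blast

lemma edges_within_rtrancl_sym:
  assumes "symp E" and "(x, y) \<in> (edges_within E S)\<^sup>*"
  shows "(y, x) \<in> (edges_within E S)\<^sup>*"
proof -
  have "sym (edges_within E S)"
    unfolding sym_def edges_within_def using assms(1) by (auto dest: sympD)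
  then show ?thesis using assms(2) sym_rtrancl unfolding sym_def by blast
qed

lemma edges_within_rtrancl_mem: "(x, y) \<in> (edges_within E S)\<^sup>* \<Longrightarrow> x \<in> S \<Longrightarrow> y \<in> S"
  by (induction rule: rtrancl_induct) (auto simp: edges_within_def)

lemma component_at_self [simp]: "x \<in> component_at E S x"
  unfolding component_at_def by simp

lemma component_at_subset: "x \<in> S \<Longrightarrow> component_at E S x \<subseteq> S"
  unfolding component_at_def by (auto dest: edges_within_rtrancl_mem)

lemma component_at_edge_closed:
  assumes "y \<in> component_at E S x" and "y \<in> S" and "z \<in> S" and "E y z"
  shows "z \<in> component_at E S x"
proof -
  have "(y, z) \<in> edges_within E S" using assms(2-4) by (simp add: edges_within_def)
  with assms(1) show ?thesis unfolding component_at_def by (simp add: rtrancl_into_rtrancl)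
qed

lemma connected_in_from_root:
  assumes "symp E" and "a \<in> A" and "\<forall>x\<in>A. (a, x) \<in> (edges_within E A)\<^sup>*"
  shows "connected_in E A"
  unfolding connected_in_iff
  using assms edges_within_rtrancl_sym[OF assms(1)] by (meson empty_iff rtrancl_trans)

lemma edges_within_rtrancl_component_at:
  "(x, y) \<in> (edges_within E S)\<^sup>* \<Longrightarrow> (x, y) \<in> (edges_within E (component_at E S x))\<^sup>*"
proof (induction rule: rtrancl_induct)
  case (step y z)
  have "(x, z) \<in> (edges_within E S)\<^sup>*" using step.hyps by (rule rtrancl_into_rtrancl)
  with step.hyps have "(y, z) \<in> edges_within E (component_at E S x)"
    unfolding component_at_def by (simp add: edges_within_def)
  with step.IH show ?case by (rule rtrancl_into_rtrancl)
qed simp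

lemma connected_in_component_at:
  assumes "symp E"
  shows "connected_in E (component_at E S x)"
proof (rule connected_in_from_root[OF assms component_at_self], rule ballI)
  fix y assume "y \<in> component_at E S x"
  then have "(x, y) \<in> (edges_within E S)\<^sup>*" by (simp add: component_at_def)
  then show "(x, y) \<in> (edges_within E (component_at E S x))\<^sup>*"
    by (rule edges_within_rtrancl_component_at)
qed

lemma connected_subset_component_at:
  assumes "connected_in E A" and "A \<subseteq> S" and "a \<in> A"
  shows "A \<subseteq> component_at E S a"
proof
  fix y assume "y \<in> A"
  with assms(1,3) have "(a, y) \<in> (edges_within E A)\<^sup>*" unfolding connected_in_iff by blast
  then have "(a, y) \<in> (edges_within E S)\<^sup>*" using assms(2) by (rule edges_within_rtrancl_mono)
  then show "y \<in> component_at E S a" by (simp add: component_at_def)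
qed

lemma component_of_component_at:
  assumes "symp E" and "x \<in> S"
  shows "component_of E S (component_at E S x)"
  unfolding component_of_def
proof (intro conjI allI impI)
  show "component_at E S x \<subseteq> S" using assms(2) by (rule component_at_subset)
  show "connected_in E (component_at E S x)" using assms(1) by (rule connected_in_component_at)
  fix C assume C: "component_at E S x \<subseteq> C \<and> C \<subseteq> S \<and> connected_in E C"
  then have "x \<in> C" using component_at_self[of x E S] by (elim conjE) (rule subsetD)
  with C have "C \<subseteq> component_at E S x" by (intro connected_subset_component_at) simp_all
  with C show "C = component_at E S x" by (intro subset_antisym) simp_all
qed

lemma component_of_eq_component_at:
  assumes "symp E" and "component_of E S C" and "x \<in> C"
  shows "C = component_at E S x"
proof -
  have C: "C \<subseteq> S" "connected_in E C"
    and max: "\<And>C'. C \<subseteq> C' \<Longrightarrow> C' \<subseteq> S \<Longrightarrow> connected_in E C' \<Longrightarrow> C' = C"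
    using assms(2) unfolding component_of_def by auto
  have "C \<subseteq> component_at E S x" using C(2,1) assms(3) by (rule connected_subset_component_at)
  moreover have "component_at E S x \<subseteq> S" using C(1) assms(3) by (intro component_at_subset) blast
  ultimately have "component_at E S x = C" using connected_in_component_at[OF assms(1)] by (rule max)
  then show ?thesis by simp
qed

lemma component_of_iff:
  assumes "symp E"
  shows "component_of E S C \<longleftrightarrow> (\<exists>x\<in>S. C = component_at E S x)"
proof
  assume C: "component_of E S C"
  then obtain x where "x \<in> C" unfolding component_of_def connected_in_def by blast
  moreover from this C have "x \<in> S" unfolding component_of_def by blast
  ultimately show "\<exists>x\<in>S. C = component_at E S x"
    using component_of_eq_component_at[OF assms C] by blast
qed (use component_of_component_at[OF assms] in blast)

lemma component_of_edge_closed: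
  assumes "symp E" and "component_of E S C" and "y \<in> C" and "z \<in> S" and "E y z"
  shows "z \<in> C"
proof -
  have "y \<in> S" using assms(2,3) unfolding component_of_def by blast
  with assms component_at_edge_closed[of y E S y z] show ?thesis
    using component_of_eq_component_at[OF assms(1-3)] by simp
qed

lemma component_of_connected_subset:
  assumes "symp E" and "component_of E S C" and "connected_in E A" and "A \<subseteq> S"
    and "x \<in> A" and "x \<in> C"
  shows "A \<subseteq> C"
  using connected_subset_component_at[OF assms(3-5)]
    component_of_eq_component_at[OF assms(1,2,6)] by simp

lemma component_of_disjoint:
  assumes "symp E" and "component_of E S C" and "component_of E S C'" and "C \<noteq> C'"
  shows "C \<inter> C' = {}"
proof (rule equals0I)
  fix x assume x: "x \<in> C \<inter> C'"
  then have "C = component_at E S x" by (intro component_of_eq_component_at[OF assms(1,2)]) simp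
  moreover from x have "C' = component_at E S x"
    by (intro component_of_eq_component_at[OF assms(1,3)]) simp
  ultimately show False using assms(4) by simp
qed

lemma edges_within_rtrancl_exit:
  assumes "(a, y) \<in> (edges_within E C)\<^sup>*" and "a \<in> A" and "y \<notin> A"
  shows "\<exists>x\<in>A. \<exists>z\<in>C - A. E x z"
  using assms
proof (induction rule: rtrancl_induct)
  case (step y z)
  then show ?case unfolding edges_within_def by (cases "y \<in> A") auto
qed simp

lemma component_of_adjacent_complement:
  assumes "symp E" and "connected_in E V" and "component_of E S R" and "S \<subseteq> V" and "y \<in> V - S"
  shows "\<exists>r\<in>R. \<exists>z\<in>V - S. E r z"
proof -
  obtain r where r: "r \<in> R" using assms(3) unfolding component_of_def connected_in_def by blast
  have "R \<subseteq> S" using assms(3) unfolding component_of_def by simp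
  with assms(2,4,5) r have "(r, y) \<in> (edges_within E V)\<^sup>*" "y \<notin> R"
    unfolding connected_in_iff by auto
  from edges_within_rtrancl_exit[OF this(1) r this(2)]
  obtain x z where "x \<in> R" "z \<in> V - R" "E x z" by blast
  with component_of_edge_closed[OF assms(1,3)] show ?thesis by blast
qed

lemma connected_in_Un_edge:
  assumes "symp E" and "connected_in E A" and "connected_in E B"
    and "a \<in> A" and "b \<in> B" and "E a b"
  shows "connected_in E (A \<union> B)"
proof (rule connected_in_from_root[OF assms(1), where a = a])
  have ab: "(a, b) \<in> edges_within E (A \<union> B)" using assms(4-6) unfolding edges_within_def by simp
  have "(a, x) \<in> (edges_within E A)\<^sup>*" if "x \<in> A" for x
    using that assms(2,4) unfolding connected_in_iff by simp
  moreover have "(b, x) \<in> (edges_within E B)\<^sup>*" if "x \<in> B" for x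
    using that assms(3,5) unfolding connected_in_iff by simp
  ultimately show "\<forall>x\<in>A \<union> B. (a, x) \<in> (edges_within E (A \<union> B))\<^sup>*"
    using ab edges_within_rtrancl_mono
    by (metis Un_iff converse_rtrancl_into_rtrancl sup_ge1 sup_ge2)
qed (use assms(4) in simp)

lemma connected_in_image:
  assumes "symp E" and "connected_in E A"
    and "\<And>x y. x \<in> A \<Longrightarrow> y \<in> A \<Longrightarrow> E x y \<Longrightarrow> E (f x) (f y)"
  shows "connected_in E (f ` A)"
proof -
  obtain a where a: "a \<in> A" using assms(2) unfolding connected_in_iff by blast
  have "(f a, f x) \<in> (edges_within E (f ` A))\<^sup>*" if "(a, x) \<in> (edges_within E A)\<^sup>*" for x
    using that
  proof (induction rule: rtrancl_induct)
    case (step y z)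
    then have "(f y, f z) \<in> edges_within E (f ` A)"
      using assms(3) unfolding edges_within_def by auto
    with step.IH show ?case by simp
  qed simp
  with assms(2) a show ?thesis
    unfolding connected_in_iff[of E A]
    by (intro connected_in_from_root[OF assms(1), where a = "f a"]) auto
qed

lemma star_subset: "u \<in> V \<Longrightarrow> star V E u \<subseteq> V"
  unfolding star_def nbrs_def by auto

lemma star_self [simp]: "u \<in> star V E u"
  unfolding star_def by simp

lemma connected_in_star:
  assumes "symp E"
  shows "connected_in E (star V E u)"
proof (rule connected_in_from_root[OF assms star_self], rule ballI)
  fix y assume "y \<in> star V E u"
  then have "y = u \<or> (u, y) \<in> edges_within E (star V E u)"
    by (auto simp: star_def nbrs_def edges_within_def)
  then show "(u, y) \<in> (edges_within E (star V E u))\<^sup>*" by blast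
qed

lemma Ccomp_eq_component_at:
  assumes "symp E" and "connected_in E A" and "A \<subseteq> V - star V E u" and "a \<in> A"
  shows "Ccomp V E u A = component_at E (V - star V E u) a"
  unfolding Ccomp_def
proof (rule the_equality)
  have "a \<in> V - star V E u" using assms(3,4) by (rule subsetD)
  then show "component_of E (V - star V E u) (component_at E (V - star V E u) a)
      \<and> A \<subseteq> component_at E (V - star V E u) a"
    using component_of_component_at[OF assms(1)] connected_subset_component_at[OF assms(2-4)]
    by simp
  show "C = component_at E (V - star V E u) a"
    if "component_of E (V - star V E u) C \<and> A \<subseteq> C" for C
    using that assms(4) component_of_eq_component_at[OF assms(1)] by (elim conjE) blast
qed

section \<open>Graph automorphisms\<close>

definition graph_automorphism :: "'a set \<Rightarrow> ('a \<Rightarrow> 'a \<Rightarrow> bool) \<Rightarrow> ('a \<Rightarrow> 'a) \<Rightarrow> bool" where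
  "graph_automorphism V E \<mu> \<longleftrightarrow> bij_betw \<mu> V V \<and> (\<forall>x\<in>V. \<forall>y\<in>V. E x y \<longleftrightarrow> E (\<mu> x) (\<mu> y))"

lemma deck_transformation_automorphism:
  "deck_transformation VL EL \<phi> \<mu> \<Longrightarrow> graph_automorphism VL EL \<mu>"
  unfolding deck_transformation_def graph_automorphism_def by blast

lemma graph_automorphism_inv:
  assumes "graph_automorphism V E \<mu>"
  shows "graph_automorphism V E (inv_into V \<mu>)"
proof -
  have bij: "bij_betw \<mu> V V" and edge: "\<forall>x\<in>V. \<forall>y\<in>V. E x y \<longleftrightarrow> E (\<mu> x) (\<mu> y)"
    using assms unfolding graph_automorphism_def by auto
  have "bij_betw (inv_into V \<mu>) V V" using bij by (rule bij_betw_inv_into)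
  moreover have "E x y \<longleftrightarrow> E (inv_into V \<mu> x) (inv_into V \<mu> y)" if "x \<in> V" "y \<in> V" for x y
  proof -
    have "inv_into V \<mu> x \<in> V" "inv_into V \<mu> y \<in> V"
      using that bij by (simp_all add: bij_betwE[OF bij_betw_inv_into[OF bij]])
    moreover have "\<mu> (inv_into V \<mu> x) = x" "\<mu> (inv_into V \<mu> y) = y"
      using that bij by (simp_all add: bij_betw_inv_into_right)
    ultimately show ?thesis using edge by metis
  qed
  ultimately show ?thesis unfolding graph_automorphism_def by blast
qed

lemma automorphism_image_star:
  assumes "graph_automorphism V E \<mu>" and "u \<in> V"
  shows "\<mu> ` star V E u = star V E (\<mu> u)"
proof -
  have im: "\<mu> ` V = V" and edge: "\<And>x y. x \<in> V \<Longrightarrow> y \<in> V \<Longrightarrow> E x y \<longleftrightarrow> E (\<mu> x) (\<mu> y)"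
    using assms(1) unfolding graph_automorphism_def bij_betw_def by auto
  have "\<mu> ` {w \<in> V. E u w} = {w \<in> V. E (\<mu> u) w}"
  proof (intro equalityI subsetI)
    fix x assume "x \<in> \<mu> ` {w \<in> V. E u w}"
    then show "x \<in> {w \<in> V. E (\<mu> u) w}" using im edge[OF assms(2)] by blast
  next
    fix x assume x: "x \<in> {w \<in> V. E (\<mu> u) w}"
    then obtain w where "w \<in> V" "x = \<mu> w" using im by auto
    with x show "x \<in> \<mu> ` {w \<in> V. E u w}" using edge[OF assms(2)] by blast
  qed
  then show ?thesis unfolding star_def nbrs_def by simp
qed

lemma automorphism_image_star_complement:
  assumes "graph_automorphism V E \<mu>" and "u \<in> V"
  shows "\<mu> ` (V - star V E u) = V - star V E (\<mu> u)"
proof -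
  have "inj_on \<mu> V" "\<mu> ` V = V" using assms(1) unfolding graph_automorphism_def bij_betw_def by auto
  then show ?thesis
    using inj_on_image_set_diff star_subset[OF assms(2)] automorphism_image_star[OF assms]
    by (metis Diff_subset)
qed

lemma image_component_at_subset:
  assumes "\<And>x y. x \<in> S \<Longrightarrow> y \<in> S \<Longrightarrow> E x y \<Longrightarrow> E (f x) (f y)"
  shows "f ` component_at E S a \<subseteq> component_at E (f ` S) (f a)"
proof
  fix y' assume "y' \<in> f ` component_at E S a"
  then obtain y where y: "(a, y) \<in> (edges_within E S)\<^sup>*" "y' = f y"
    unfolding component_at_def by blast
  from y(1) have "(f a, f y) \<in> (edges_within E (f ` S))\<^sup>*"
  proof (induction rule: rtrancl_induct)
    case (step y z)
    then have "(f y, f z) \<in> edges_within E (f ` S)"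
      using assms unfolding edges_within_def by auto
    with step.IH show ?case by (rule rtrancl_into_rtrancl)
  qed simp
  with y(2) show "y' \<in> component_at E (f ` S) (f a)" by (simp add: component_at_def)
qed

lemma automorphism_image_component_at:
  assumes "graph_automorphism V E \<mu>" and "S \<subseteq> V" and "a \<in> S"
  shows "\<mu> ` component_at E S a = component_at E (\<mu> ` S) (\<mu> a)"
proof
  have bij: "bij_betw \<mu> V V" and edge: "\<forall>x\<in>V. \<forall>y\<in>V. E x y \<longleftrightarrow> E (\<mu> x) (\<mu> y)"
    using assms(1) unfolding graph_automorphism_def by auto
  show "\<mu> ` component_at E S a \<subseteq> component_at E (\<mu> ` S) (\<mu> a)"
    using assms(2) edge by (intro image_component_at_subset) blast
  define \<nu> where "\<nu> = inv_into V \<mu>"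
  have \<nu>: "\<forall>x\<in>V. \<forall>y\<in>V. E x y \<longleftrightarrow> E (\<nu> x) (\<nu> y)"
    using graph_automorphism_inv[OF assms(1)] unfolding \<nu>_def graph_automorphism_def by blast
  have \<nu>\<mu>: "\<nu> (\<mu> x) = x" if "x \<in> V" for x
    using that bij unfolding \<nu>_def by (simp add: bij_betw_inv_into_left)
  have \<mu>\<nu>: "\<mu> (\<nu> x) = x" if "x \<in> V" for x
    using that bij unfolding \<nu>_def by (simp add: bij_betw_inv_into_right)
  have \<mu>S: "\<mu> ` S \<subseteq> V" using assms(2) bij by (auto dest: bij_betwE)
  have "\<nu> ` \<mu> ` S = S" using assms(2) \<nu>\<mu> by (force simp: image_image)
  then have "\<nu> ` component_at E (\<mu> ` S) (\<mu> a) \<subseteq> component_at E S a"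
    using image_component_at_subset[of "\<mu> ` S" E \<nu> "\<mu> a"] \<mu>S \<nu> \<nu>\<mu> assms(2,3) by (auto simp: subset_iff)
  moreover have "component_at E (\<mu> ` S) (\<mu> a) \<subseteq> V"
    using component_at_subset[of "\<mu> a" "\<mu> ` S" E] assms(3) \<mu>S by blast
  ultimately show "component_at E (\<mu> ` S) (\<mu> a) \<subseteq> \<mu> ` component_at E S a"
    using \<mu>\<nu> by (force simp: image_subset_iff)
qed

lemma automorphism_image_component:
  assumes "symp E" and "graph_automorphism V E \<mu>" and "S \<subseteq> V" and "component_of E S C"
  shows "component_of E (\<mu> ` S) (\<mu> ` C)"
proof -
  obtain a where "a \<in> S" "C = component_at E S a" using assms(4) component_of_iff[OF assms(1)] by blast
  then show ?thesis
    using automorphism_image_component_at[OF assms(2,3)] component_of_component_at[OF assms(1)]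
    by simp
qed

section \<open>Covering maps\<close>

lemma covering_image_nbrs:
  "covering_map VL EL VG EG \<phi> \<Longrightarrow> u \<in> VL \<Longrightarrow> \<phi> ` nbrs VL EL u = nbrs VG EG (\<phi> u)"
  unfolding covering_map_def using bij_betw_imp_surj_on by blast

lemma covering_image_star:
  "covering_map VL EL VG EG \<phi> \<Longrightarrow> u \<in> VL \<Longrightarrow> \<phi> ` star VL EL u = star VG EG (\<phi> u)"
  unfolding star_def using covering_image_nbrs by (metis image_insert)

lemma covering_fiber_stars_disjoint:
  assumes "sgraph VL EL" and "sgraph VG EG" and cov: "covering_map VL EL VG EG \<phi>"
    and "u \<in> VL" and "w \<in> VL" and "\<phi> u = \<phi> w" and "u \<noteq> w"
  shows "star VL EL u \<inter> star VL EL w = {}"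
proof (rule equals0I)
  have symL: "symp EL" using assms(1) by (rule sgraph_symp)
  have irrG: "\<not> EG x x" for x using assms(2) unfolding sgraph_def by blast
  have hom: "EL x y \<Longrightarrow> EG (\<phi> x) (\<phi> y)" for x y using cov unfolding covering_map_def by blast
  fix z assume z: "z \<in> star VL EL u \<inter> star VL EL w"
  then have "z \<noteq> u"
    using assms(6,7) irrG hom unfolding star_def nbrs_def by (metis Int_iff insert_iff mem_Collect_eq)
  moreover have "z \<noteq> w"
    using z assms(6,7) irrG hom unfolding star_def nbrs_def by (metis Int_iff insert_iff mem_Collect_eq)
  ultimately have "z \<in> VL" "u \<in> nbrs VL EL z" "w \<in> nbrs VL EL z"
    using z assms(4,5) symL unfolding star_def nbrs_def by (auto dest: sympD)
  moreover have "inj_on \<phi> (nbrs VL EL z)"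
    using cov \<open>z \<in> VL\<close> unfolding covering_map_def bij_betw_def by blast
  ultimately show False using assms(6,7) by (meson inj_onD)
qed

lemma covering_star_preimage:
  assumes cov: "covering_map VL EL VG EG \<phi>" and "symp EL" and "sgraph VG EG"
    and "y \<in> VL" and "\<phi> y \<in> star VG EG x"
  shows "\<exists>u\<in>VL. \<phi> u = x \<and> y \<in> star VL EL u"
proof (cases "\<phi> y = x")
  case False
  with assms(3,5) have "x \<in> nbrs VG EG (\<phi> y)"
    unfolding star_def nbrs_def sgraph_def by auto
  then obtain u where "u \<in> nbrs VL EL y" "\<phi> u = x"
    using covering_image_nbrs[OF cov assms(4)] by (metis imageE)
  with assms(2,4) show ?thesis unfolding star_def nbrs_def by (auto dest: sympD)
qed (use assms(4) in auto)

text \<open>Paths in \<open>B\<close> lift edge by edge to paths in \<open>Bt\<close>, since \<open>\<phi>\<close> is bijective on neighbourhoods.\<close>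
lemma covering_component_preimage_onto:
  assumes cov: "covering_map VL EL VG EG \<phi>" and "symp EL"
    and "B \<subseteq> VG" and "connected_in EG B" and Bt: "component_of EL {x \<in> VL. \<phi> x \<in> B} Bt"
  shows "B \<subseteq> \<phi> ` Bt"
proof
  have Bt_sub: "Bt \<subseteq> {x \<in> VL. \<phi> x \<in> B}" using Bt unfolding component_of_def by blast
  obtain b where b: "b \<in> Bt" using Bt unfolding component_of_def connected_in_def by blast
  have lift: "z \<in> \<phi> ` Bt" if "(\<phi> b, z) \<in> (edges_within EG B)\<^sup>*" for z
    using that
  proof (induction rule: rtrancl_induct)
    case (step z z')
    then obtain t where t: "t \<in> Bt" "z = \<phi> t" by blast
    have tVL: "t \<in> VL" using t(1) Bt_sub by blast
    have z': "z' \<in> B" "EG z z'" using step.hyps(2) unfolding edges_within_def by auto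
    then have "z' \<in> nbrs VG EG (\<phi> t)" using assms(3) t(2) unfolding nbrs_def by blast
    then obtain t' where t': "t' \<in> nbrs VL EL t" "z' = \<phi> t'"
      using covering_image_nbrs[OF cov tVL] by (metis imageE)
    then have "t' \<in> {x \<in> VL. \<phi> x \<in> B}" "EL t t'" using z'(1) unfolding nbrs_def by auto
    then have "t' \<in> Bt" using component_of_edge_closed[OF assms(2) Bt t(1)] by blast
    with t'(2) show ?case by blast
  qed (use b in blast)
  fix z assume "z \<in> B"
  moreover have "\<phi> b \<in> B" using b Bt_sub by blast
  ultimately show "z \<in> \<phi> ` Bt" using assms(4) lift unfolding connected_in_iff by blast
qed

section \<open>Components of the complement of a star\<close>

lemma component_outside_star_subset:
  assumes "symp E" and "connected_in E V" and "u \<in> V"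
    and K: "component_of E (V - star V E u) K" and "star V E w \<subseteq> K"
    and X: "component_of E (V - star V E w) X" and "u \<notin> X"
  shows "X \<subseteq> K"
proof
  fix z assume zX: "z \<in> X"
  have K_sub: "K \<subseteq> V - star V E u" using K unfolding component_of_def by blast
  have X_sub: "X \<subseteq> V - star V E w" using X unfolding component_of_def by blast
  have star_u: "star V E u \<subseteq> V - star V E w" using star_subset[OF assms(3)] assms(5) K_sub by blast
  show "z \<in> K"
  proof (rule ccontr)
    assume "z \<notin> K"
    have "\<exists>A. connected_in E A \<and> A \<subseteq> V - star V E w \<and> z \<in> A \<and> u \<in> A"
    proof (cases "z \<in> star V E u")
      case True
      with star_u show ?thesis
        by (intro exI[of _ "star V E u"]) (simp add: connected_in_star[OF assms(1)])
    next
      case False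
      with zX X_sub have z: "z \<in> V - star V E u" by blast
      define R where "R = component_at E (V - star V E u) z"
      have R: "component_of E (V - star V E u) R"
        unfolding R_def using assms(1) z by (rule component_of_component_at)
      have "R \<noteq> K" using \<open>z \<notin> K\<close> unfolding R_def by auto
      then have "R \<inter> star V E w = {}" using component_of_disjoint[OF assms(1) R K] assms(5) by blast
      moreover have "R \<subseteq> V - star V E u" using R unfolding component_of_def by blast
      ultimately have R_sub: "R \<subseteq> V - star V E w" by blast
      have "u \<in> V - (V - star V E u)" using assms(3) by simp
      from component_of_adjacent_complement[OF assms(1,2) R Diff_subset this]
      obtain r y where "r \<in> R" "y \<in> star V E u" "E r y" by blast
      moreover have "connected_in E R" unfolding R_def using assms(1) by (rule connected_in_component_at)
      ultimately have "connected_in E (R \<union> star V E u)"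
        using connected_in_Un_edge[OF assms(1) _ connected_in_star[OF assms(1)]] by blast
      moreover have "z \<in> R" unfolding R_def by simp
      ultimately show ?thesis using R_sub star_u
        by (intro exI[of _ "R \<union> star V E u"]) simp
    qed
    then obtain A where "connected_in E A" "A \<subseteq> V - star V E w" "z \<in> A" "u \<in> A" by blast
    with component_of_connected_subset[OF assms(1) X] zX assms(7) show False by blast
  qed
qed

lemma component_containing_translated_star_largest:
  assumes "sgraph V E" and "connected_in E V" and aut: "graph_automorphism V E \<mu>" and "u \<in> V"
    and K: "component_of E (V - star V E u) K" and "star V E (\<mu> u) \<subseteq> K"
    and K': "component_of E (V - star V E u) K'" and "K' \<noteq> K"
  shows "card K' < card K"
proof -
  have symp: "symp E" using assms(1) by (rule sgraph_symp)
  have finite: "finite V" using assms(1) unfolding sgraph_def by blast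
  have inj: "inj_on \<mu> V" using aut unfolding graph_automorphism_def bij_betw_def by blast
  have K_sub: "K \<subseteq> V" and K'_sub: "K' \<subseteq> V"
    using K K' unfolding component_of_def by auto
  let ?Sw = "V - star V E (\<mu> u)"
  have smaller: "card X < card K" if X: "component_of E ?Sw X" and "u \<notin> X" for X
  proof -
    have "X \<subseteq> K"
      by (rule component_outside_star_subset[OF symp assms(2,4) K assms(6) X \<open>u \<notin> X\<close>])
    moreover have "X \<subseteq> ?Sw" using X unfolding component_of_def by blast
    then have "\<mu> u \<notin> X" by auto
    moreover have "\<mu> u \<in> K" using assms(6) star_self[of "\<mu> u" V E] by (rule subsetD)
    ultimately have "X \<subset> K" by blast
    then show ?thesis using finite K_sub by (meson psubset_card_mono rev_finite_subset)
  qed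
  have image: "component_of E ?Sw (\<mu> ` C)" if "component_of E (V - star V E u) C" for C
    using automorphism_image_component[OF symp aut _ that]
      automorphism_image_star_complement[OF aut assms(4)] by auto
  have "\<mu> ` K \<noteq> \<mu> ` K'" using inj K_sub K'_sub assms(8) by (simp add: inj_on_image_eq_iff)
  then have "u \<notin> \<mu> ` K \<or> u \<notin> \<mu> ` K'"
    using component_of_disjoint[OF symp image[OF K] image[OF K']] by blast
  moreover have "card (\<mu> ` K) = card K" "card (\<mu> ` K') = card K'"
    using inj K_sub K'_sub by (auto intro: card_image inj_on_subset)
  ultimately show ?thesis using smaller image K K' by fastforce
qed

section \<open>Lifts of a component of the complement of a star\<close>

locale star_complement_lift =
  fixes VL :: "'a set" and EL :: "'a \<Rightarrow> 'a \<Rightarrow> bool"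
    and VG :: "'b set" and EG :: "'b \<Rightarrow> 'b \<Rightarrow> bool"
    and \<phi> :: "'a \<Rightarrow> 'b" and v :: 'b and B :: "'b set" and Bt :: "'a set"
  assumes sgraph_L: "sgraph VL EL" and sgraph_G: "sgraph VG EG"
    and connected_L: "connected_in EL VL"
    and regular: "regular_covering VL EL VG EG \<phi>"
    and v: "v \<in> VG"
    and B: "component_of EG (VG - star VG EG v) B"
    and Bt: "component_of EL {x \<in> VL. \<phi> x \<in> B} Bt"
begin

abbreviation over_v :: "'a set" where "over_v \<equiv> {x \<in> VL. \<phi> x = v}"

abbreviation over_B :: "'a set" where "over_B \<equiv> {x \<in> VL. \<phi> x \<in> B}"

definition adjacent_fiber :: "'a set" where
  "adjacent_fiber = {u \<in> over_v. adjacent_sets EL (star VL EL u) Bt}"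

lemma symp_L: "symp EL"
  using sgraph_L by (rule sgraph_symp)

lemma covering: "covering_map VL EL VG EG \<phi>"
  using regular unfolding regular_covering_def by blast

lemma B_subset: "B \<subseteq> VG - star VG EG v"
  using B unfolding component_of_def by blast

lemma Bt_subset: "Bt \<subseteq> over_B"
  using Bt unfolding component_of_def by blast

lemma connected_Bt: "connected_in EL Bt"
  using Bt unfolding component_of_def by blast

lemma star_over_v_disjoint_over_B: "u \<in> over_v \<Longrightarrow> star VL EL u \<inter> over_B = {}"
  using covering_image_star[OF covering, of u] B_subset by blast

lemma Bt_subset_star_complement: "u \<in> over_v \<Longrightarrow> Bt \<subseteq> VL - star VL EL u"
  using star_over_v_disjoint_over_B Bt_subset by blast

lemma Ccomp_Bt_eq_component_at:
  "u \<in> over_v \<Longrightarrow> b \<in> Bt \<Longrightarrow> Ccomp VL EL u Bt = component_at EL (VL - star VL EL u) b"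
  using Ccomp_eq_component_at[OF symp_L connected_Bt Bt_subset_star_complement] by blast

lemma Bt_subset_Ccomp: "u \<in> over_v \<Longrightarrow> Bt \<subseteq> Ccomp VL EL u Bt"
  using Ccomp_Bt_eq_component_at
    connected_subset_component_at[OF connected_Bt Bt_subset_star_complement]
  by (metis connected_Bt connected_in_def ex_in_conv)

text \<open>An edge leaving \<open>Bt\<close> leaves the preimage of \<open>B\<close>; its image leaves \<open>B\<close> and hence enters
  \<open>st(v)\<close>, so it ends in the star of a vertex of the fibre over \<open>v\<close>.\<close>
lemma edge_leaving_Bt:
  assumes "b \<in> Bt" and "y \<in> VL - Bt" and "EL b y"
  shows "\<exists>u\<in>adjacent_fiber. y \<in> star VL EL u"
proof -
  have hom: "EG (\<phi> b) (\<phi> y)" using covering assms(3) unfolding covering_map_def by blast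
  have "y \<notin> over_B" using component_of_edge_closed[OF symp_L Bt assms(1) _ assms(3)] assms(2) by blast
  then have "\<phi> y \<notin> B" using assms(2) by blast
  moreover have "\<phi> y \<in> VG" using covering assms(2) unfolding covering_map_def by blast
  moreover have "\<phi> b \<in> B" using assms(1) Bt_subset by blast
  ultimately have "\<phi> y \<in> star VG EG v"
    using component_of_edge_closed[OF sgraph_symp[OF sgraph_G] B _ _ hom] by blast
  then obtain u where u: "u \<in> over_v" "y \<in> star VL EL u"
    using covering_star_preimage[OF covering symp_L sgraph_G] assms(2) by blast
  have "EL y b" using assms(3) symp_L by (blast dest: sympD)
  moreover have "star VL EL u \<inter> Bt = {}" using Bt_subset_star_complement[OF u(1)] by blast
  ultimately have "u \<in> adjacent_fiber"
    using u assms(1) unfolding adjacent_fiber_def adjacent_sets_def by blast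
  with u(2) show ?thesis by blast
qed

lemma adjacent_fiber_nonempty: "adjacent_fiber \<noteq> {}"
proof -
  obtain f where f: "f \<in> VL" "\<phi> f = v" using covering v unfolding covering_map_def by force
  then have "f \<in> VL - over_B" using B_subset by auto
  from component_of_adjacent_complement[OF symp_L connected_L Bt _ this]
  obtain r z where "r \<in> Bt" "z \<in> VL - over_B" "EL r z" by blast
  moreover from this have "z \<in> VL - Bt" using Bt_subset by blast
  ultimately show ?thesis using edge_leaving_Bt by blast
qed

lemma Ccomp_eq_Bt_if_unique_adjacent:
  assumes "adjacent_fiber = {u0}"
  shows "Ccomp VL EL u0 Bt = Bt"
proof -
  have u0: "u0 \<in> over_v" using assms unfolding adjacent_fiber_def by blast
  obtain b where b: "b \<in> Bt" using connected_Bt unfolding connected_in_def by blast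
  let ?S = "VL - star VL EL u0"
  have "component_at EL ?S b \<subseteq> Bt"
  proof
    fix y assume "y \<in> component_at EL ?S b"
    then have path: "(b, y) \<in> (edges_within EL ?S)\<^sup>*" by (simp add: component_at_def)
    show "y \<in> Bt"
    proof (rule ccontr)
      assume "y \<notin> Bt"
      from edges_within_rtrancl_exit[OF path b this]
      obtain x z where x: "x \<in> Bt" and z: "z \<in> ?S - Bt" and "EL x z" by blast
      then obtain u where "u \<in> adjacent_fiber" "z \<in> star VL EL u"
        using edge_leaving_Bt[OF x] by blast
      with assms z show False by simp
    qed
  qed
  with Bt_subset_Ccomp[OF u0] Ccomp_Bt_eq_component_at[OF u0 b] show ?thesis by blast
qed

lemma over_B_in_deck_image: "a \<in> over_B \<Longrightarrow> \<exists>\<mu>. deck_transformation VL EL \<phi> \<mu> \<and> a \<in> \<mu> ` Bt"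
proof -
  assume a: "a \<in> over_B"
  have "B \<subseteq> VG" "connected_in EG B" using B unfolding component_of_def by auto
  with a obtain t where t: "t \<in> Bt" "\<phi> t = \<phi> a"
    using covering_component_preimage_onto[OF covering symp_L _ _ Bt] by (metis (lifting) imageE mem_Collect_eq subsetD)
  moreover have "t \<in> VL" using t(1) Bt_subset by blast
  ultimately obtain \<mu> where "deck_transformation VL EL \<phi> \<mu>" "\<mu> t = a"
    using regular a unfolding regular_covering_def by blast
  with t(1) show ?thesis by blast
qed

lemma deck_image_Bt:
  assumes "deck_transformation VL EL \<phi> \<mu>"
  shows "connected_in EL (\<mu> ` Bt)" and "\<mu> ` Bt \<subseteq> over_B"
proof -
  have "\<mu> ` VL = VL" and edge: "\<forall>x\<in>VL. \<forall>y\<in>VL. EL x y \<longleftrightarrow> EL (\<mu> x) (\<mu> y)"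
    and fib: "\<forall>x\<in>VL. \<phi> (\<mu> x) = \<phi> x"
    using assms unfolding deck_transformation_def bij_betw_def by auto
  then show "\<mu> ` Bt \<subseteq> over_B" using Bt_subset by force
  show "connected_in EL (\<mu> ` Bt)"
    using connected_in_image[OF symp_L connected_Bt] edge Bt_subset by blast
qed

lemma deck_image_adjacent_fiber:
  assumes "deck_transformation VL EL \<phi> \<mu>" and "u \<in> adjacent_fiber"
  shows "\<mu> u \<in> over_v" and "\<exists>s\<in>star VL EL (\<mu> u). \<exists>t\<in>\<mu> ` Bt. EL s t"
proof -
  have aut: "graph_automorphism VL EL \<mu>" using assms(1) by (rule deck_transformation_automorphism)
  have im: "\<mu> ` VL = VL" and edge: "\<forall>x\<in>VL. \<forall>y\<in>VL. EL x y \<longleftrightarrow> EL (\<mu> x) (\<mu> y)"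
    and fib: "\<forall>x\<in>VL. \<phi> (\<mu> x) = \<phi> x"
    using assms(1) unfolding deck_transformation_def bij_betw_def by auto
  have u: "u \<in> VL" "\<phi> u = v" using assms(2) unfolding adjacent_fiber_def by auto
  then show "\<mu> u \<in> over_v" using im fib by auto
  obtain s c where sc: "s \<in> star VL EL u" "c \<in> Bt" "EL s c"
    using assms(2) unfolding adjacent_fiber_def adjacent_sets_def by blast
  then have "s \<in> VL" "c \<in> VL" using star_subset[OF u(1)] Bt_subset by auto
  with sc have "\<mu> s \<in> star VL EL (\<mu> u)" "EL (\<mu> s) (\<mu> c)"
    using automorphism_image_star[OF aut u(1)] edge by auto
  with sc(2) show "\<exists>s\<in>star VL EL (\<mu> u). \<exists>t\<in>\<mu> ` Bt. EL s t" by blast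
qed

lemma other_star_in_component:
  assumes "u0 \<in> adjacent_fiber" and "u1 \<in> adjacent_fiber" and "u0 \<noteq> u1"
    and "u \<in> over_v" and "a \<in> over_B"
  shows "\<exists>w\<in>over_v. w \<noteq> u \<and> star VL EL w \<subseteq> component_at EL (VL - star VL EL u) a"
proof -
  obtain \<mu> where \<mu>: "deck_transformation VL EL \<phi> \<mu>" "a \<in> \<mu> ` Bt"
    using over_B_in_deck_image[OF assms(5)] by blast
  have "inj_on \<mu> VL" using \<mu>(1) unfolding deck_transformation_def bij_betw_def by blast
  moreover have "u0 \<in> VL" "u1 \<in> VL" using assms(1,2) unfolding adjacent_fiber_def by auto
  ultimately have "\<mu> u0 \<noteq> \<mu> u1" using assms(3) by (meson inj_onD)
  then obtain w where w: "w \<in> over_v" "w \<noteq> u" "\<exists>s\<in>star VL EL w. \<exists>t\<in>\<mu> ` Bt. EL s t"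
    using deck_image_adjacent_fiber[OF \<mu>(1) assms(1)] deck_image_adjacent_fiber[OF \<mu>(1) assms(2)]
    by metis
  have "star VL EL w \<inter> star VL EL u = {}"
    using covering_fiber_stars_disjoint[OF sgraph_L sgraph_G covering] w(1,2) assms(4) by auto
  then have "star VL EL w \<union> \<mu> ` Bt \<subseteq> VL - star VL EL u"
    using star_subset[of w VL EL] w(1) deck_image_Bt(2)[OF \<mu>(1)]
      star_over_v_disjoint_over_B[OF assms(4)] by auto
  moreover have "connected_in EL (star VL EL w \<union> \<mu> ` Bt)"
    using w(3) connected_in_Un_edge[OF symp_L connected_in_star[OF symp_L] deck_image_Bt(1)[OF \<mu>(1)]]
    by blast
  ultimately have "star VL EL w \<union> \<mu> ` Bt \<subseteq> component_at EL (VL - star VL EL u) a"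
    using \<mu>(2) by (intro connected_subset_component_at) auto
  with w(1,2) show ?thesis by blast
qed

lemma component_of_over_B_largest:
  assumes "u0 \<in> adjacent_fiber" and "u1 \<in> adjacent_fiber" and "u0 \<noteq> u1"
    and "u \<in> over_v" and "a \<in> over_B"
    and K: "component_of EL (VL - star VL EL u) K" and "K \<noteq> component_at EL (VL - star VL EL u) a"
  shows "card K < card (component_at EL (VL - star VL EL u) a)"
proof -
  obtain w where w: "w \<in> over_v" "star VL EL w \<subseteq> component_at EL (VL - star VL EL u) a"
    using other_star_in_component[OF assms(1-5)] by blast
  obtain \<mu> where "deck_transformation VL EL \<phi> \<mu>" "\<mu> u = w"
    using regular w(1) assms(4) unfolding regular_covering_def by auto
  then have "graph_automorphism VL EL \<mu>" "star VL EL (\<mu> u) \<subseteq> component_at EL (VL - star VL EL u) a"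
    using deck_transformation_automorphism w(2) by auto
  moreover have "a \<in> VL - star VL EL u" using assms(4,5) star_over_v_disjoint_over_B by blast
  ultimately show ?thesis
    using component_containing_translated_star_largest[OF sgraph_L connected_L _ _ _ _ K]
      component_of_component_at[OF symp_L] assms(4,7) by blast
qed

lemma over_B_subset_Ccomp:
  assumes "u0 \<in> adjacent_fiber" and "u1 \<in> adjacent_fiber" and "u0 \<noteq> u1" and "u \<in> over_v"
  shows "over_B \<subseteq> Ccomp VL EL u Bt"
proof
  fix a assume a: "a \<in> over_B"
  obtain b where b: "b \<in> Bt" using connected_Bt unfolding connected_in_def by blast
  let ?S = "VL - star VL EL u"
  have "b \<in> over_B" using b Bt_subset by blast
  have "component_at EL ?S a = component_at EL ?S b"
  proof (rule ccontr)
    assume ne: "component_at EL ?S a \<noteq> component_at EL ?S b"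
    have "a \<in> ?S" "b \<in> ?S" using a \<open>b \<in> over_B\<close> star_over_v_disjoint_over_B[OF assms(4)] by auto
    then have "component_of EL ?S (component_at EL ?S a)" "component_of EL ?S (component_at EL ?S b)"
      using component_of_component_at[OF symp_L] by auto
    then show False
      using component_of_over_B_largest[OF assms a]
        component_of_over_B_largest[OF assms \<open>b \<in> over_B\<close>] ne
      by fastforce
  qed
  then show "a \<in> Ccomp VL EL u Bt"
    using Ccomp_Bt_eq_component_at[OF assms(4) b] component_at_self by metis
qed

end

theorem lemma3p7:
  fixes VL :: "'a set" and EL :: "'a \<Rightarrow> 'a \<Rightarrow> bool"
    and VG :: "'b set" and EG :: "'b \<Rightarrow> 'b \<Rightarrow> bool"
    and \<phi> :: "'a \<Rightarrow> 'b" and v :: 'b and B :: "'b set" and Bt :: "'a set"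
  assumes "sgraph VL EL" and "sgraph VG EG"
    and "connected_in EL VL" and "connected_in EG VG"
    and "regular_covering VL EL VG EG \<phi>"
    and "v \<in> VG"
    and "component_of EG (VG - star VG EG v) B"
    and "component_of EL {x \<in> VL. \<phi> x \<in> B} Bt"
  defines "D \<equiv> (\<Inter>u\<in>{x \<in> VL. \<phi> x = v}. Ccomp VL EL u Bt)"
  shows "{x \<in> VL. \<phi> x \<in> B} \<subseteq> D \<or>
         (\<exists>u\<in>{x \<in> VL. \<phi> x = v}. adjacent_sets EL (star VL EL u) Bt \<and> Ccomp VL EL u Bt = D)"
proof -
  interpret star_complement_lift VL EL VG EG \<phi> v B Bt
    using assms by unfold_locales
  obtain u0 where u0: "u0 \<in> adjacent_fiber" using adjacent_fiber_nonempty by blast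
  show ?thesis
  proof (cases "adjacent_fiber = {u0}")
    case True
    then have "Ccomp VL EL u0 Bt = D"
      using Ccomp_eq_Bt_if_unique_adjacent Bt_subset_Ccomp u0
      unfolding D_def adjacent_fiber_def by blast
    with u0 show ?thesis unfolding adjacent_fiber_def by blast
  next
    case False
    then obtain u1 where "u1 \<in> adjacent_fiber" "u1 \<noteq> u0" using u0 by blast
    with u0 have "over_B \<subseteq> D" using over_B_subset_Ccomp unfolding D_def by blast
    then show ?thesis by blast
  qed
qed

end
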